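(* Let $0\le T_1\le T$, $T_1>0$, $p\ge 1$, and $\beta>0$. Let $y\in W^{1,1}(0,T)$ and let $\alpha$ be a function with $\alpha(t)\ge 0$ for $t\ge 0$ and $\alpha(t)\ge\beta$ for $t\ge T_1$. Suppose \[ y'(t)+\alpha(t)y(t)\le g(t),\qquad y(0)=y_0, \] where $g\in L^1(0,T_1)\cap L^p(T_1,T)$. Then \[ \sup_{0\le t\le T}y(t)\le |y_0|+(1+\beta^{-1})\big(\|g\|_{L^1(0,T_1)}+\|g\|_{L^p(T_1,T)}\big). \] *)

theory Defs
  imports "HOL-Analysis.Analysis"
begin

text \<open>y belongs to W^{1,1}(a,b) with weak derivative y': y' is Lebesgue integrable on
  [a,b] and y is (the absolutely continuous representative) given by
  y t = y a + integral of y' over [a,t].\<close>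
definition W11 :: "(real \<Rightarrow> real) \<Rightarrow> (real \<Rightarrow> real) \<Rightarrow> real \<Rightarrow> real \<Rightarrow> bool" where
  "W11 y y' a b \<longleftrightarrow> set_integrable lborel {a..b} y' \<and>
     (\<forall>t\<in>{a..b}. y t = y a + (LINT s:{a..t}|lborel. y' s))"

definition in_Lp :: "real \<Rightarrow> (real \<Rightarrow> real) \<Rightarrow> real \<Rightarrow> real \<Rightarrow> bool" where
  "in_Lp p g a b \<longleftrightarrow> set_borel_measurable lborel {a..b} g \<and>
     set_integrable lborel {a..b} (\<lambda>t. \<bar>g t\<bar> powr p)"

definition Lp_norm :: "real \<Rightarrow> (real \<Rightarrow> real) \<Rightarrow> real \<Rightarrow> real \<Rightarrow> real" where
  "Lp_norm p g a b = (LINT t:{a..b}|lborel. \<bar>g t\<bar> powr p) powr (1 / p)"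

end

theory Submission
  imports Defs
begin

(* Wherever y exceeds a level c >= max (y u) 0 on an interval where alpha >= beta >= 0, the
   differential inequality gives y' <= |g| - beta c, because alpha y >= beta y >= beta c.
   Integrating from the last time s before t at which y <= c yields
   y t <= c + int_s^t |g| - beta c (t - s).
   On [0, T1] take beta = 0 and c = |y0|, so y <= |y0| + ||g||_1.  On [T1, T] the pointwise
   bound x <= x^p / L^(p-1) + L gives int_s^t |g| <= L (1 + (t - s)) with L = ||g||_p, and the
   level c = max (|y0| + ||g||_1) (L / beta) makes the damping beta c (t - s) absorb the
   growing part, so y <= c + L. *)

lemma le_powr_div_powr_add:
  fixes x L p :: real
  assumes "0 \<le> x" "0 < L" "1 \<le> p"
  shows "x \<le> x powr p / L powr (p - 1) + L"
proof (cases "x \<le> L")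
  case True
  then show ?thesis using assms by (simp add: add_increasing)
next
  case False
  then have "x * L powr (p - 1) \<le> x * x powr (p - 1)"
    using assms by (intro mult_left_mono powr_mono2) auto
  also have "\<dots> = x powr p"
    using False assms by (simp add: powr_diff powr_one)
  finally have "x \<le> x powr p / L powr (p - 1)"
    using assms by (simp add: pos_le_divide_eq)
  then show ?thesis using assms by linarith
qed

lemma set_integral_mono_set:
  fixes f :: "'a \<Rightarrow> real"
  assumes "set_integrable M A f" "B \<in> sets M" "B \<subseteq> A" "\<And>x. x \<in> A \<Longrightarrow> 0 \<le> f x"
  shows "(LINT x:B|M. f x) \<le> (LINT x:A|M. f x)"
  using set_integrable_subset[OF assms(1-3)] assms
  unfolding set_lebesgue_integral_def set_integrable_def
  by (intro integral_mono) (auto simp: indicator_def)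

lemma set_integrable_const_Icc: "set_integrable lborel {a..b :: real} (\<lambda>_. c :: real)"
  by (intro borel_integrable_atLeastAtMost' continuous_on_const)

lemma in_Lp_set_integrable_abs:
  assumes "1 \<le> p" "in_Lp p g a b"
  shows "set_integrable lborel {a..b} (\<lambda>t. \<bar>g t\<bar>)"
proof (rule set_integrable_bound)
  show "set_integrable lborel {a..b} (\<lambda>t. \<bar>g t\<bar> powr p + 1)"
    using assms(2) unfolding in_Lp_def by (intro set_integral_add set_integrable_const_Icc) auto
  show "set_borel_measurable lborel {a..b} (\<lambda>t. \<bar>g t\<bar>)"
  proof -
    have "(\<lambda>t. indicator {a..b} t *\<^sub>R \<bar>g t\<bar>) = (\<lambda>t. \<bar>indicator {a..b} t *\<^sub>R g t\<bar>)"
      by (auto simp: indicator_def)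
    then show ?thesis
      using assms(2) unfolding in_Lp_def set_borel_measurable_def by (simp add: borel_measurable_abs)
  qed
  have "x \<le> x powr p + 1" if "0 \<le> x" for x :: real
  proof (cases "x \<le> 1")
    case False
    then have "x powr 1 \<le> x powr p" using assms(1) by (intro powr_mono) auto
    then show ?thesis by simp
  qed (use powr_ge_zero[of x p] in linarith)
  then show "AE t in lborel. t \<in> {a..b} \<longrightarrow> norm \<bar>g t\<bar> \<le> norm (\<bar>g t\<bar> powr p + 1)"
    by auto
qed

lemma Lp_norm_nonneg: "0 \<le> Lp_norm p g a b"
  by (simp add: Lp_norm_def)

lemma set_integral_abs_le_L1_norm:
  assumes "in_Lp 1 g a b" "a \<le> s" "t \<le> b"
  shows "(LINT r:{s<..t}|lborel. \<bar>g r\<bar>) \<le> Lp_norm 1 g a b"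
proof -
  have "(LINT r:{s<..t}|lborel. \<bar>g r\<bar>) \<le> (LINT r:{a..b}|lborel. \<bar>g r\<bar>)"
    using assms by (intro set_integral_mono_set in_Lp_set_integrable_abs[of 1]) auto
  moreover have "0 \<le> (LINT r:{a..b}|lborel. \<bar>g r\<bar>)"
    by (auto simp: set_lebesgue_integral_def intro!: integral_nonneg)
  ultimately show ?thesis by (simp add: Lp_norm_def)
qed

lemma set_integral_abs_le_of_powr_integral_le:
  assumes p: "1 \<le> p" and g: "in_Lp p g a b" and st: "a \<le> s" "s \<le> t" "t \<le> b"
    and "0 < L" and I_le: "(LINT r:{a..b}|lborel. \<bar>g r\<bar> powr p) \<le> L powr p"
  shows "(LINT r:{s<..t}|lborel. \<bar>g r\<bar>) \<le> L * (1 + (t - s))"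
proof -
  have sub: "{s<..t} \<subseteq> {a..b}" using st by auto
  have gp: "set_integrable lborel {s<..t} (\<lambda>r. \<bar>g r\<bar> powr p)"
    using g unfolding in_Lp_def by (intro set_integrable_subset[OF _ _ sub]) auto
  have const: "set_integrable lborel {s<..t} (\<lambda>_. L)"
    using set_integrable_const_Icc[of s t L] by (rule set_integrable_subset) auto
  have "(LINT r:{s<..t}|lborel. \<bar>g r\<bar>)
      \<le> (LINT r:{s<..t}|lborel. \<bar>g r\<bar> powr p / L powr (p - 1) + L)"
  proof (rule set_integral_mono)
    show "set_integrable lborel {s<..t} (\<lambda>r. \<bar>g r\<bar>)"
      using in_Lp_set_integrable_abs[OF p g] by (rule set_integrable_subset) (use sub in auto)
    show "set_integrable lborel {s<..t} (\<lambda>r. \<bar>g r\<bar> powr p / L powr (p - 1) + L)"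
      by (rule set_integral_add(1)[OF set_integrable_divide const]) (rule gp)
    show "\<bar>g r\<bar> \<le> \<bar>g r\<bar> powr p / L powr (p - 1) + L" for r
      using \<open>0 < L\<close> p by (intro le_powr_div_powr_add) auto
  qed
  also have "\<dots> = (LINT r:{s<..t}|lborel. \<bar>g r\<bar> powr p) / L powr (p - 1) + L * (t - s)"
    using gp const st by (simp add: set_integral_const)
  also have "\<dots> \<le> L powr p / L powr (p - 1) + L * (t - s)"
  proof -
    have "(LINT r:{s<..t}|lborel. \<bar>g r\<bar> powr p) \<le> (LINT r:{a..b}|lborel. \<bar>g r\<bar> powr p)"
      using g sub by (intro set_integral_mono_set) (auto simp: in_Lp_def)
    then show ?thesis using I_le by (intro add_right_mono divide_right_mono) auto
  qed
  also have "L powr p / L powr (p - 1) = L"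
    using \<open>0 < L\<close> by (simp add: powr_diff powr_one)
  finally show ?thesis by (simp add: algebra_simps)
qed

lemma set_integral_abs_le_Lp_norm:
  assumes p: "1 \<le> p" and g: "in_Lp p g a b" and st: "a \<le> s" "s \<le> t" "t \<le> b"
  shows "(LINT r:{s<..t}|lborel. \<bar>g r\<bar>) \<le> Lp_norm p g a b * (1 + (t - s))"
proof -
  have bound: "(LINT r:{s<..t}|lborel. \<bar>g r\<bar>) \<le> L * (1 + (t - s))"
    if L: "Lp_norm p g a b < L" for L
  proof (rule set_integral_abs_le_of_powr_integral_le[OF p g st])
    show "0 < L" using L Lp_norm_nonneg[of p g a b] by linarith
    have "0 \<le> (LINT r:{a..b}|lborel. \<bar>g r\<bar> powr p)"
      by (auto simp: set_lebesgue_integral_def intro!: integral_nonneg)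
    then have "(LINT r:{a..b}|lborel. \<bar>g r\<bar> powr p) = Lp_norm p g a b powr p"
      using p by (simp add: Lp_norm_def powr_powr)
    also have "\<dots> \<le> L powr p" using L p by (intro powr_mono2) (auto simp: Lp_norm_nonneg)
    finally show "(LINT r:{a..b}|lborel. \<bar>g r\<bar> powr p) \<le> L powr p" .
  qed
  \<comment> \<open>Approaching the norm from above avoids dividing by a vanishing norm.\<close>
  have "(LINT r:{s<..t}|lborel. \<bar>g r\<bar>) / (1 + (t - s)) \<le> Lp_norm p g a b"
    by (rule dense_ge) (use bound st in \<open>simp add: pos_divide_le_eq\<close>)
  then show ?thesis using st by (simp add: pos_divide_le_eq)
qed

lemma W11_integral_diff:
  assumes y: "W11 y y' a b" and st: "a \<le> s" "s \<le> t" "t \<le> b"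
  shows "y t - y s = (LINT r:{s<..t}|lborel. y' r)"
proof -
  have y': "set_integrable lborel {a..b} y'"
    and y_eq: "\<And>t. t \<in> {a..b} \<Longrightarrow> y t = y a + (LINT r:{a..t}|lborel. y' r)"
    using y unfolding W11_def by blast+
  have "{a..t} = {a..s} \<union> {s<..t}" using st by auto
  then have "(LINT r:{a..t}|lborel. y' r) = (LINT r:{a..s} \<union> {s<..t}|lborel. y' r)"
    by simp
  also have "\<dots> = (LINT r:{a..s}|lborel. y' r) + (LINT r:{s<..t}|lborel. y' r)"
  proof (rule set_integral_Un)
    show "set_integrable lborel {a..s} y'"
      using y' by (rule set_integrable_subset) (use st in auto)
    show "set_integrable lborel {s<..t} y'"
      using y' by (rule set_integrable_subset) (use st in auto)
  qed auto
  finally show ?thesis using y_eq[of s] y_eq[of t] st by simp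
qed

lemma W11_continuous_on:
  assumes y: "W11 y y' a b"
  shows "continuous_on {a..b} y"
proof -
  have y': "set_integrable lborel {a..b} y'"
    and y_eq: "\<And>t. t \<in> {a..b} \<Longrightarrow> y t = y a + (LINT r:{a..t}|lborel. y' r)"
    using y unfolding W11_def by blast+
  have "continuous_on {a..b} (\<lambda>t. y a + integral {a..t} y')"
    using set_borel_integral_eq_integral(1)[OF y']
    by (intro continuous_intros indefinite_integral_continuous_1)
  moreover have "y a + integral {a..t} y' = y t" if t: "t \<in> {a..b}" for t
  proof -
    have "set_integrable lborel {a..t} y'"
      using y' by (rule set_integrable_subset) (use t in auto)
    then show ?thesis using y_eq[OF t] by (simp add: set_borel_integral_eq_integral(2))
  qed
  ultimately show ?thesis by (rule continuous_on_eq)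
qed

lemma W11_le_level_plus_integral:
  assumes y: "W11 y y' a b" and ut: "a \<le> u" "u \<le> t" "t \<le> b"
    and "y u \<le> c"
    and h: "set_integrable lborel {u..t} h"
    and slope: "AE r in lborel. r \<in> {u..t} \<longrightarrow> c < y r \<longrightarrow> y' r \<le> h r"
  shows "\<exists>s\<in>{u..t}. y t \<le> c + (LINT r:{s<..t}|lborel. h r)"
proof -
  define S where "S = {u..t} \<inter> y -` {..c}"
  define s where "s = Sup S"
  have "continuous_on {u..t} y"
    using W11_continuous_on[OF y] by (rule continuous_on_subset) (use ut in auto)
  then have "closed S" unfolding S_def by (intro continuous_closed_preimage) auto
  moreover have "S \<noteq> {}" "bdd_above S"
    using \<open>y u \<le> c\<close> ut unfolding S_def by (auto intro: bdd_aboveI[of _ t])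
  ultimately have "s \<in> S" unfolding s_def by (intro closed_contains_Sup)
  then have s: "u \<le> s" "s \<le> t" "y s \<le> c" unfolding S_def by auto
  have above: "c < y r" if r: "r \<in> {s<..t}" for r
  proof (rule ccontr)
    assume "\<not> c < y r"
    then have "r \<in> S" using r s unfolding S_def by auto
    then have "r \<le> s" unfolding s_def using \<open>bdd_above S\<close> by (rule cSup_upper)
    then show False using r by simp
  qed
  have sub: "{s<..t} \<subseteq> {u..t}" using s by auto
  have "y t - y s = (LINT r:{s<..t}|lborel. y' r)"
    by (rule W11_integral_diff[OF y]) (use s ut in auto)
  also have "\<dots> \<le> (LINT r:{s<..t}|lborel. h r)"
  proof (rule set_integral_mono_AE)
    have "set_integrable lborel {a..b} y'" using y unfolding W11_def by blast
    then show "set_integrable lborel {s<..t} y'"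
      by (rule set_integrable_subset) (use s ut in auto)
    show "set_integrable lborel {s<..t} h"
      using h by (rule set_integrable_subset) (use sub in auto)
    show "AE r\<in>{s<..t} in lborel. y' r \<le> h r"
      using slope by eventually_elim (use sub above in auto)
  qed
  finally show ?thesis using s by (intro bexI[of _ s]) auto
qed

lemma W11_le_level_plus_integral_dissipative:
  assumes y: "W11 y y' a b" and ut: "a \<le> u" "u \<le> t" "t \<le> b"
    and "0 \<le> \<beta>" and \<alpha>: "\<And>r. r \<in> {u..t} \<Longrightarrow> \<beta> \<le> \<alpha> r"
    and ineq: "AE r in lborel. r \<in> {u..t} \<longrightarrow> y' r + \<alpha> r * y r \<le> g r"
    and g: "set_integrable lborel {u..t} (\<lambda>r. \<bar>g r\<bar>)"
    and "0 \<le> c" "y u \<le> c"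
  shows "\<exists>s\<in>{u..t}. y t \<le> c + (LINT r:{s<..t}|lborel. \<bar>g r\<bar>) - \<beta> * c * (t - s)"
proof -
  have const: "set_integrable lborel {u..t} (\<lambda>_. \<beta> * c)" by (rule set_integrable_const_Icc)
  have "\<exists>s\<in>{u..t}. y t \<le> c + (LINT r:{s<..t}|lborel. \<bar>g r\<bar> - \<beta> * c)"
  proof (rule W11_le_level_plus_integral[OF y ut \<open>y u \<le> c\<close>])
    show "set_integrable lborel {u..t} (\<lambda>r. \<bar>g r\<bar> - \<beta> * c)"
      using g const by (rule set_integral_diff(1))
    show "AE r in lborel. r \<in> {u..t} \<longrightarrow> c < y r \<longrightarrow> y' r \<le> \<bar>g r\<bar> - \<beta> * c"
      using ineq
    proof eventually_elim
      case (elim r)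
      show ?case
      proof (intro impI)
        assume r: "r \<in> {u..t}" "c < y r"
        have "\<beta> * c \<le> \<beta> * y r" using r \<open>0 \<le> \<beta>\<close> by (intro mult_left_mono) auto
        also have "\<dots> \<le> \<alpha> r * y r" using r \<alpha>[of r] \<open>0 \<le> c\<close> by (intro mult_right_mono) auto
        finally show "y' r \<le> \<bar>g r\<bar> - \<beta> * c" using elim r by linarith
      qed
    qed
  qed
  then obtain s where s: "s \<in> {u..t}" "y t \<le> c + (LINT r:{s<..t}|lborel. \<bar>g r\<bar> - \<beta> * c)"
    by blast
  have sub: "{s<..t} \<subseteq> {u..t}" using s(1) by auto
  have "set_integrable lborel {s<..t} (\<lambda>r. \<bar>g r\<bar>)"
    using g by (rule set_integrable_subset) (use sub in auto)
  moreover have "set_integrable lborel {s<..t} (\<lambda>_. \<beta> * c)"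
    using const by (rule set_integrable_subset) (use sub in auto)
  ultimately have "(LINT r:{s<..t}|lborel. \<bar>g r\<bar> - \<beta> * c)
      = (LINT r:{s<..t}|lborel. \<bar>g r\<bar>) - \<beta> * c * (t - s)"
    using s by (simp add: set_integral_diff(2) set_integral_const)
  then show ?thesis using s by (intro bexI[of _ s]) auto
qed

lemma W11_le_plus_L1_norm:
  assumes y: "W11 y y' a b" and ut: "a \<le> u" "u \<le> t" "t \<le> v" "v \<le> b"
    and \<alpha>: "\<And>r. r \<in> {u..v} \<Longrightarrow> 0 \<le> \<alpha> r"
    and ineq: "AE r in lborel. r \<in> {u..v} \<longrightarrow> y' r + \<alpha> r * y r \<le> g r"
    and g: "in_Lp 1 g u v" and "0 \<le> c" "y u \<le> c"
  shows "y t \<le> c + Lp_norm 1 g u v"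
proof -
  have "\<exists>s\<in>{u..t}. y t \<le> c + (LINT r:{s<..t}|lborel. \<bar>g r\<bar>) - 0 * c * (t - s)"
  proof (rule W11_le_level_plus_integral_dissipative[OF y _ _ _ order.refl _ _ _ \<open>0 \<le> c\<close> \<open>y u \<le> c\<close>])
    show "AE r in lborel. r \<in> {u..t} \<longrightarrow> y' r + \<alpha> r * y r \<le> g r"
      using ineq by eventually_elim (use ut in auto)
    show "set_integrable lborel {u..t} (\<lambda>r. \<bar>g r\<bar>)"
      using in_Lp_set_integrable_abs[OF order.refl g] by (rule set_integrable_subset) (use ut in auto)
  qed (use ut \<alpha> in auto)
  then obtain s where "s \<in> {u..t}" "y t \<le> c + (LINT r:{s<..t}|lborel. \<bar>g r\<bar>)"
    by auto
  with set_integral_abs_le_L1_norm[OF g, of s t] ut show ?thesis by auto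
qed

lemma W11_le_plus_Lp_norm:
  assumes y: "W11 y y' a b" and ut: "a \<le> u" "u \<le> t" "t \<le> v" "v \<le> b"
    and "0 \<le> \<beta>" and \<alpha>: "\<And>r. r \<in> {u..v} \<Longrightarrow> \<beta> \<le> \<alpha> r"
    and ineq: "AE r in lborel. r \<in> {u..v} \<longrightarrow> y' r + \<alpha> r * y r \<le> g r"
    and p: "1 \<le> p" and g: "in_Lp p g u v" and "0 \<le> c" "y u \<le> c"
    and damping: "Lp_norm p g u v \<le> \<beta> * c"
  shows "y t \<le> c + Lp_norm p g u v"
proof -
  have "\<exists>s\<in>{u..t}. y t \<le> c + (LINT r:{s<..t}|lborel. \<bar>g r\<bar>) - \<beta> * c * (t - s)"
  proof (rule W11_le_level_plus_integral_dissipative[OF y _ _ _ \<open>0 \<le> \<beta>\<close> _ _ _ \<open>0 \<le> c\<close> \<open>y u \<le> c\<close>])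
    show "AE r in lborel. r \<in> {u..t} \<longrightarrow> y' r + \<alpha> r * y r \<le> g r"
      using ineq by eventually_elim (use ut in auto)
    show "set_integrable lborel {u..t} (\<lambda>r. \<bar>g r\<bar>)"
      using in_Lp_set_integrable_abs[OF p g] by (rule set_integrable_subset) (use ut in auto)
  qed (use ut \<alpha> in auto)
  then obtain s where s: "s \<in> {u..t}"
    and "y t \<le> c + (LINT r:{s<..t}|lborel. \<bar>g r\<bar>) - \<beta> * c * (t - s)"
    by auto
  moreover have "(LINT r:{s<..t}|lborel. \<bar>g r\<bar>) \<le> Lp_norm p g u v * (1 + (t - s))"
    using s ut by (intro set_integral_abs_le_Lp_norm[OF p g]) auto
  moreover have "Lp_norm p g u v * (t - s) \<le> \<beta> * c * (t - s)"
    using s damping by (intro mult_right_mono) auto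
  ultimately show ?thesis by (simp add: algebra_simps)
qed

lemma max_add_div_add_le:
  fixes x N L \<beta> :: real
  assumes "0 \<le> x" "0 \<le> N" "0 \<le> L" "0 < \<beta>"
  shows "max (x + N) (L / \<beta>) + L \<le> x + (1 + 1 / \<beta>) * (N + L)"
proof -
  have "x + (1 + 1 / \<beta>) * (N + L) = x + N + L + N / \<beta> + L / \<beta>"
    using assms(4) by (simp add: field_simps)
  moreover have "0 \<le> N / \<beta>" using assms by simp
  ultimately show ?thesis using assms by (auto simp: max_def)
qed

theorem lemma3p1:
  fixes T T\<^sub>1 p \<beta> y0 :: real and y y' \<alpha> g :: "real \<Rightarrow> real"
  assumes "0 \<le> T\<^sub>1" "T\<^sub>1 \<le> T" "T\<^sub>1 > 0" "p \<ge> 1" "\<beta> > 0"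
    and "W11 y y' 0 T"
    and "\<And>t. t \<ge> 0 \<Longrightarrow> \<alpha> t \<ge> 0"
    and "\<And>t. t \<ge> T\<^sub>1 \<Longrightarrow> \<alpha> t \<ge> \<beta>"
    and "AE t in lborel. t \<in> {0..T} \<longrightarrow> y' t + \<alpha> t * y t \<le> g t"
    and "y 0 = y0"
    and "in_Lp 1 g 0 T\<^sub>1" and "in_Lp p g T\<^sub>1 T"
  shows "(SUP t\<in>{0..T}. y t) \<le>
           \<bar>y0\<bar> + (1 + 1 / \<beta>) * (Lp_norm 1 g 0 T\<^sub>1 + Lp_norm p g T\<^sub>1 T)"
proof -
  define N where "N = Lp_norm 1 g 0 T\<^sub>1"
  define L where "L = Lp_norm p g T\<^sub>1 T"
  define c where "c = max (\<bar>y0\<bar> + N) (L / \<beta>)"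
  have ineq: "AE r in lborel. r \<in> {u..v} \<longrightarrow> y' r + \<alpha> r * y r \<le> g r"
    if "0 \<le> u" "v \<le> T" for u v
    using assms(9) by eventually_elim (use that in auto)
  have early: "y t \<le> \<bar>y0\<bar> + N" if "t \<in> {0..T\<^sub>1}" for t
    unfolding N_def using that assms
    by (intro W11_le_plus_L1_norm[where u = 0 and v = T\<^sub>1 and \<alpha> = \<alpha>] ineq) auto
  have late: "y t \<le> c + L" if "t \<in> {T\<^sub>1..T}" for t
  proof -
    have "y T\<^sub>1 \<le> c" using early[of T\<^sub>1] assms(1) unfolding c_def by auto
    moreover have "L \<le> \<beta> * c"
      using assms(5) mult_left_mono[of "L / \<beta>" c \<beta>] unfolding c_def by simp
    moreover have "0 \<le> c" using Lp_norm_nonneg[of 1 g 0 T\<^sub>1] unfolding c_def N_def by auto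
    ultimately show ?thesis
      unfolding L_def using that assms
      by (intro W11_le_plus_Lp_norm[where u = T\<^sub>1 and v = T and \<alpha> = \<alpha>] ineq) auto
  qed
  have "y t \<le> c + L" if "t \<in> {0..T}" for t
  proof (cases "t \<le> T\<^sub>1")
    case True
    then show ?thesis
      using early[of t] that Lp_norm_nonneg[of p g T\<^sub>1 T] unfolding c_def L_def by auto
  qed (use late that in auto)
  moreover have "c + L \<le> \<bar>y0\<bar> + (1 + 1 / \<beta>) * (N + L)"
    unfolding c_def N_def L_def using assms(5) by (intro max_add_div_add_le Lp_norm_nonneg) auto
  ultimately show ?thesis
    unfolding N_def L_def using assms(1,2) by (intro cSUP_least) fastforce+
qed

end
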